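(* Let $k$ be a difference field of characteristic $0$ and $R=k\{y_1,\ldots,y_n\}$. If $I$ is a monomial $\sigma$-ideal of $R$, then its radical well-mixed closure $\langle I\rangle_r$ is also a monomial $\sigma$-ideal.
   Context: A difference field is a field $k$ with a ring endomorphism $\sigma$; $R=k\{y_1,\ldots,y_n\}$ is the polynomial ring over $k$ in the variables $\sigma^j(y_i)$, with $\sigma$ extended naturally. For $p=\sum_ic_ix^i\in\mathbb{N}[x]$ and $a\in R$, $a^p=\prod_i(\sigma^i(a))^{c_i}$; monomials are $\mathbf{y}^{\mathbf{u}}=y_1^{u_1}\cdots y_n^{u_n}$ with $\mathbf{u}\in\mathbb{N}[x]^n$. A $\sigma$-ideal is an ideal stable under $\sigma$; monomial if generated by monomials; well-mixed if $ab\in I\Rightarrow a\sigma(b)\in I$. $\langle I\rangle_r$ is the smallest radical well-mixed $\sigma$-ideal containing $I$. *)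

theory Defs
  imports "HOL-Library.Poly_Mapping"
begin

text \<open>Difference polynomial ring k{y_1..y_n}: the variable (i, j) stands for
  sigma^j(y_i), with i ranging over a finite index type 'n.\<close>

type_synonym 'n dmon = "('n \<times> nat) \<Rightarrow>\<^sub>0 nat"
type_synonym ('n, 'k) dpoly = "'n dmon \<Rightarrow>\<^sub>0 'k"

definition difference_field :: "('k::field \<Rightarrow> 'k) \<Rightarrow> bool" where
  "difference_field \<sigma> \<longleftrightarrow> (\<forall>a b. \<sigma> (a + b) = \<sigma> a + \<sigma> b) \<and>
      (\<forall>a b. \<sigma> (a * b) = \<sigma> a * \<sigma> b) \<and> \<sigma> 1 = 1"

definition shift_mon :: "'n dmon \<Rightarrow> 'n dmon" where
  "shift_mon m = (\<Sum>v\<in>Poly_Mapping.keys m. Poly_Mapping.single (fst v, Suc (snd v)) (Poly_Mapping.lookup m v))"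

definition sigmaR :: "('k::field \<Rightarrow> 'k) \<Rightarrow> ('n, 'k) dpoly \<Rightarrow> ('n, 'k) dpoly" where
  "sigmaR \<sigma> p = (\<Sum>m\<in>Poly_Mapping.keys p. Poly_Mapping.single (shift_mon m) (\<sigma> (Poly_Mapping.lookup p m)))"

definition dmonomial :: "'n dmon \<Rightarrow> ('n, 'k::field) dpoly" where
  "dmonomial u = Poly_Mapping.single u 1"

definition is_ideal :: "('a::comm_ring_1) set \<Rightarrow> bool" where
  "is_ideal I \<longleftrightarrow> 0 \<in> I \<and> (\<forall>a\<in>I. \<forall>b\<in>I. a + b \<in> I) \<and> (\<forall>r a. a \<in> I \<longrightarrow> r * a \<in> I)"

definition ideal_gen :: "('a::comm_ring_1) set \<Rightarrow> 'a set" where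
  "ideal_gen S = \<Inter>{J. is_ideal J \<and> S \<subseteq> J}"

definition sigma_ideal :: "('k::field \<Rightarrow> 'k) \<Rightarrow> ('n, 'k) dpoly set \<Rightarrow> bool" where
  "sigma_ideal \<sigma> I \<longleftrightarrow> is_ideal I \<and> (\<forall>a\<in>I. sigmaR \<sigma> a \<in> I)"

definition monomial_ideal :: "('n, 'k::field) dpoly set \<Rightarrow> bool" where
  "monomial_ideal I \<longleftrightarrow> (\<exists>S. S \<subseteq> range dmonomial \<and> I = ideal_gen S)"

definition well_mixed :: "('k::field \<Rightarrow> 'k) \<Rightarrow> ('n, 'k) dpoly set \<Rightarrow> bool" where
  "well_mixed \<sigma> I \<longleftrightarrow> (\<forall>a b. a * b \<in> I \<longrightarrow> a * sigmaR \<sigma> b \<in> I)"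

definition radical_set :: "('a::comm_ring_1) set \<Rightarrow> bool" where
  "radical_set I \<longleftrightarrow> (\<forall>a k. 0 < k \<longrightarrow> a ^ k \<in> I \<longrightarrow> a \<in> I)"

definition rwm_closure :: "('k::field \<Rightarrow> 'k) \<Rightarrow> ('n, 'k) dpoly set \<Rightarrow> ('n, 'k) dpoly set" where
  "rwm_closure \<sigma> I = \<Inter>{J. sigma_ideal \<sigma> J \<and> well_mixed \<sigma> J \<and> radical_set J \<and> I \<subseteq> J}"

end

theory Submission
  imports Defs "HOL-Library.Countable_Set"
begin

text \<open>Let C be the radical well-mixed closure of I and call a polynomial C-monomial if all of
  its monomials lie in C.  The C-monomial polynomials form an ideal generated by monomials, so it
  suffices to show that they form a radical well-mixed \<sigma>-ideal: it then contains I, hence C.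
  In a radical ideal, membership of a monomial depends only on its support.  Hence, if
  y^u \<notin> C, setting every variable outside the support of u to zero, a ring
  endomorphism of R, annihilates all C-monomial polynomials.  Applied to a product ab or a power
  f^k, and using that R is a domain, this shows that every product of a monomial of a with
  one of b, and every monomial of f, lies in C; well-mixedness and \<sigma>-stability then pass
  from C to the monomials.\<close>

lemma lookup_mult_keys:
  "Poly_Mapping.lookup (f * g) k =
     (\<Sum>l\<in>Poly_Mapping.keys f. \<Sum>q\<in>Poly_Mapping.keys g. Poly_Mapping.lookup f l * Poly_Mapping.lookup g q when k = l + q)"
proof -
  have inner: "(\<Sum>q. Poly_Mapping.lookup g q when k = l + q) = (\<Sum>q\<in>Poly_Mapping.keys g. Poly_Mapping.lookup g q when k = l + q)" for l
    by (rule Sum_any.expand_superset) (auto simp: in_keys_iff)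
  have "Poly_Mapping.lookup (f * g) k = (\<Sum>l\<in>Poly_Mapping.keys f. Poly_Mapping.lookup f l * (\<Sum>q\<in>Poly_Mapping.keys g. Poly_Mapping.lookup g q when k = l + q))"
    unfolding lookup_mult inner by (rule Sum_any.expand_superset) (auto simp: in_keys_iff)
  then show ?thesis by (simp add: sum_distrib_left mult_when)
qed

lemma finite_has_max_image:
  fixes E :: "'a \<Rightarrow> 'b::linorder"
  assumes "finite A" "A \<noteq> {}"
  obtains a where "a \<in> A" "\<And>x. x \<in> A \<Longrightarrow> E x \<le> E a"
proof -
  have "Max (E ` A) \<in> E ` A" using assms by simp
  then obtain a where "a \<in> A" "E a = Max (E ` A)" by auto
  then show ?thesis using that[of a] assms by simp
qed

lemma lookup_mult_unique_decomposition:
  fixes f g :: "'a::monoid_add \<Rightarrow>\<^sub>0 'c::semiring_0"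
  assumes "a0 \<in> Poly_Mapping.keys f" "b0 \<in> Poly_Mapping.keys g"
    and unique: "\<And>a b. a \<in> Poly_Mapping.keys f \<Longrightarrow> b \<in> Poly_Mapping.keys g \<Longrightarrow> a0 + b0 = a + b \<Longrightarrow> a = a0 \<and> b = b0"
  shows "Poly_Mapping.lookup (f * g) (a0 + b0) = Poly_Mapping.lookup f a0 * Poly_Mapping.lookup g b0"
proof -
  let ?F = "Poly_Mapping.keys f" and ?G = "Poly_Mapping.keys g"
  let ?c = "Poly_Mapping.lookup f a0 * Poly_Mapping.lookup g b0"
  have "(Poly_Mapping.lookup f l * Poly_Mapping.lookup g q when a0 + b0 = l + q) =
      (if q = b0 then if l = a0 then ?c else 0 else 0)" if "l \<in> ?F" "q \<in> ?G" for l q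
  proof (cases "a0 + b0 = l + q")
    case True
    then show ?thesis using unique[OF that] by simp
  qed (auto simp: when_def)
  then have "Poly_Mapping.lookup (f * g) (a0 + b0) = (\<Sum>l\<in>?F. if l = a0 then ?c else 0)"
    unfolding lookup_mult_keys using assms(2) by (intro sum.cong) simp_all
  also have "\<dots> = ?c"
    using assms(1) by simp
  finally show ?thesis .
qed

text \<open>The product of the E-leading terms of f and g cannot cancel.\<close>

lemma poly_mapping_mult_neq_0_if_embedding:
  fixes f g :: "'a::monoid_add \<Rightarrow>\<^sub>0 'c::semiring_no_zero_divisors"
    and E :: "'a \<Rightarrow> 'b::{ordered_cancel_comm_monoid_add, linorder}"
  assumes "inj E" and E_add: "\<And>x y. E (x + y) = E x + E y"
    and "f \<noteq> 0" "g \<noteq> 0"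
  shows "f * g \<noteq> 0"
proof -
  let ?F = "Poly_Mapping.keys f" and ?G = "Poly_Mapping.keys g"
  obtain a0 where a0: "a0 \<in> ?F" "\<And>a. a \<in> ?F \<Longrightarrow> E a \<le> E a0"
    using finite_has_max_image[of ?F E] \<open>f \<noteq> 0\<close> by auto
  obtain b0 where b0: "b0 \<in> ?G" "\<And>b. b \<in> ?G \<Longrightarrow> E b \<le> E b0"
    using finite_has_max_image[of ?G E] \<open>g \<noteq> 0\<close> by auto
  have "a = a0 \<and> b = b0" if "a \<in> ?F" "b \<in> ?G" "a0 + b0 = a + b" for a b
  proof -
    have sum: "E a + E b = E a0 + E b0" using that(3) E_add by metis
    then have "E a = E a0"
      using a0(2)[OF that(1)] b0(2)[OF that(2)] add_less_le_mono[of "E a" "E a0" "E b" "E b0"] by fastforce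
    moreover from sum this have "E b = E b0" by simp
    ultimately show ?thesis using \<open>inj E\<close> by (simp add: inj_eq)
  qed
  then have "Poly_Mapping.lookup (f * g) (a0 + b0) = Poly_Mapping.lookup f a0 * Poly_Mapping.lookup g b0"
    by (rule lookup_mult_unique_decomposition[OF a0(1) b0(1)])
  moreover have "Poly_Mapping.lookup f a0 \<noteq> 0" "Poly_Mapping.lookup g b0 \<noteq> 0"
    using a0(1) b0(1) by (simp_all add: in_keys_iff)
  ultimately show ?thesis by (metis lookup_zero mult_eq_0_iff)
qed

text \<open>Poly_Mapping only knows integral domains over linearly ordered exponent monoids, which
  the exponent vectors over the finite type 'n are not; they are embedded into the
  finitely supported maps from nat to nat instead.\<close>

lemma poly_mapping_nat_embedding:
  assumes "infinite (UNIV :: 'a::countable set)"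
  obtains E :: "('a::countable \<Rightarrow>\<^sub>0 'b::monoid_add) \<Rightarrow> nat \<Rightarrow>\<^sub>0 'b"
  where "inj E" "\<And>x y. E (x + y) = E x + E y"
proof
  let ?g = "from_nat_into (UNIV :: 'a set)"
  have bij: "bij ?g" using bij_betw_from_nat_into[OF countableI_type assms] .
  then have [transfer_rule]: "inj ?g" by (rule bij_is_inj)
  show "Poly_Mapping.map_key ?g (x + y) = Poly_Mapping.map_key ?g x + Poly_Mapping.map_key ?g y" for x y :: "'a \<Rightarrow>\<^sub>0 'b"
    by (rule map_key_plus) fact
  show "inj (Poly_Mapping.map_key ?g :: ('a \<Rightarrow>\<^sub>0 'b) \<Rightarrow> _)"
  proof (rule injI)
    fix x y :: "'a \<Rightarrow>\<^sub>0 'b"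
    assume "Poly_Mapping.map_key ?g x = Poly_Mapping.map_key ?g y"
    then have "Poly_Mapping.lookup x \<circ> ?g = Poly_Mapping.lookup y \<circ> ?g"
      by (simp add: map_key.rep_eq[OF \<open>inj ?g\<close>, symmetric])
    show "x = y"
    proof (rule poly_mapping_eqI)
      fix a
      obtain n where "a = ?g n" using bij by (meson bij_pointE)
      then show "Poly_Mapping.lookup x a = Poly_Mapping.lookup y a"
        using \<open>Poly_Mapping.lookup x \<circ> ?g = Poly_Mapping.lookup y \<circ> ?g\<close> by (simp add: fun_eq_iff)
    qed
  qed
qed

lemma dpoly_mult_eq_0_iff:
  fixes f g :: "('n::finite, 'k::semiring_no_zero_divisors) dpoly"
  shows "f * g = 0 \<longleftrightarrow> f = 0 \<or> g = 0"
proof -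
  have "infinite (UNIV :: ('n \<times> nat) set)" by (simp add: finite_prod)
  then obtain E :: "'n dmon \<Rightarrow> nat \<Rightarrow>\<^sub>0 nat" where "inj E" "\<And>x y. E (x + y) = E x + E y"
    using poly_mapping_nat_embedding by blast
  then show ?thesis using poly_mapping_mult_neq_0_if_embedding[of E f g] by auto
qed

lemma dpoly_power_eq_0:
  fixes f :: "('n::finite, 'k::{semiring_1, semiring_no_zero_divisors}) dpoly"
  shows "f ^ k = 0 \<Longrightarrow> f = 0"
  by (induction k) (auto simp: dpoly_mult_eq_0_iff)

lemma keys_add_nat: "Poly_Mapping.keys (m + m' :: 'a \<Rightarrow>\<^sub>0 nat) = Poly_Mapping.keys m \<union> Poly_Mapping.keys m'"
  by (auto simp: in_keys_iff lookup_add)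

definition restrict_vars :: "'v set \<Rightarrow> (('v \<Rightarrow>\<^sub>0 nat) \<Rightarrow>\<^sub>0 'k::zero) \<Rightarrow> ('v \<Rightarrow>\<^sub>0 nat) \<Rightarrow>\<^sub>0 'k" where
  "restrict_vars T f = Abs_poly_mapping (\<lambda>m. if Poly_Mapping.keys m \<subseteq> T then Poly_Mapping.lookup f m else 0)"

lemma lookup_restrict_vars:
  "Poly_Mapping.lookup (restrict_vars T f) m = (if Poly_Mapping.keys m \<subseteq> T then Poly_Mapping.lookup f m else 0)"
proof -
  have "finite {m. (if Poly_Mapping.keys m \<subseteq> T then Poly_Mapping.lookup f m else 0) \<noteq> 0}"
    by (rule finite_subset[of _ "Poly_Mapping.keys f"]) (auto simp: in_keys_iff split: if_splits)
  then show ?thesis by (simp add: restrict_vars_def)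
qed

lemma restrict_vars_mult:
  fixes f g :: "('v \<Rightarrow>\<^sub>0 nat) \<Rightarrow>\<^sub>0 'k::semiring_0"
  shows "restrict_vars T (f * g) = restrict_vars T f * restrict_vars T g"
proof (rule poly_mapping_eqI)
  fix p
  let ?r = "restrict_vars T"
  show "Poly_Mapping.lookup (?r (f * g)) p = Poly_Mapping.lookup (?r f * ?r g) p"
  proof (cases "Poly_Mapping.keys p \<subseteq> T")
    case True
    have "Poly_Mapping.lookup (?r f) l * (\<Sum>q. Poly_Mapping.lookup (?r g) q when p = l + q) =
        Poly_Mapping.lookup f l * (\<Sum>q. Poly_Mapping.lookup g q when p = l + q)" for l
    proof (cases "Poly_Mapping.keys l \<subseteq> T")
      case True
      have "(Poly_Mapping.lookup (?r g) q when p = l + q) = (Poly_Mapping.lookup g q when p = l + q)" for q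
        using \<open>Poly_Mapping.keys p \<subseteq> T\<close> by (auto simp: when_def lookup_restrict_vars keys_add_nat)
      then show ?thesis using True by (simp add: lookup_restrict_vars)
    next
      case False
      have "(Poly_Mapping.lookup g q when p = l + q) = 0" for q
        using False \<open>Poly_Mapping.keys p \<subseteq> T\<close> by (auto simp: when_def keys_add_nat)
      then show ?thesis using False by (simp add: lookup_restrict_vars)
    qed
    then show ?thesis using True by (simp add: lookup_mult lookup_restrict_vars)
  next
    case False
    have "(Poly_Mapping.lookup (?r g) q when p = l + q) = 0" if "Poly_Mapping.lookup (?r f) l \<noteq> 0" for l q
      using False that by (auto simp: when_def lookup_restrict_vars keys_add_nat split: if_splits)
    then have "Poly_Mapping.lookup (?r f) l * (\<Sum>q. Poly_Mapping.lookup (?r g) q when p = l + q) = 0" for l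
      by (cases "Poly_Mapping.lookup (?r f) l = 0") simp_all
    then show ?thesis using False by (simp add: lookup_mult lookup_restrict_vars)
  qed
qed

lemma restrict_vars_one: "restrict_vars T (1 :: ('v \<Rightarrow>\<^sub>0 nat) \<Rightarrow>\<^sub>0 'k::zero_neq_one) = 1"
  by (rule poly_mapping_eqI) (simp add: lookup_restrict_vars lookup_one when_def)

lemma restrict_vars_power:
  fixes f :: "('v \<Rightarrow>\<^sub>0 nat) \<Rightarrow>\<^sub>0 'k::semiring_1"
  shows "restrict_vars T (f ^ k) = restrict_vars T f ^ k"
  by (induction k) (simp_all add: restrict_vars_one restrict_vars_mult)

lemma dmonomial_mult: "dmonomial a * dmonomial b = (dmonomial (a + b) :: ('n, 'k::field) dpoly)"
  by (simp add: dmonomial_def mult_single)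

lemma dmonomial_power: "(dmonomial m :: ('n, 'k::field) dpoly) ^ k = dmonomial (\<Sum>_<k. m)"
  by (induction k) (simp_all add: dmonomial_def mult_single add.commute)

lemma sigmaR_dmonomial:
  "difference_field \<sigma> \<Longrightarrow> sigmaR \<sigma> (dmonomial m) = dmonomial (shift_mon m)"
  by (simp add: sigmaR_def dmonomial_def difference_field_def)

lemma keys_sigmaR: "Poly_Mapping.keys (sigmaR \<sigma> p) \<subseteq> shift_mon ` Poly_Mapping.keys p"
proof -
  have "Poly_Mapping.keys (sigmaR \<sigma> p) \<subseteq>
      (\<Union>m\<in>Poly_Mapping.keys p. Poly_Mapping.keys (Poly_Mapping.single (shift_mon m) (\<sigma> (Poly_Mapping.lookup p m))))"
    unfolding sigmaR_def by (rule keys_sum)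
  also have "\<dots> \<subseteq> shift_mon ` Poly_Mapping.keys p" by auto
  finally show ?thesis .
qed

lemma dmonomial_add_mem:
  "is_ideal C \<Longrightarrow> dmonomial m \<in> C \<Longrightarrow> dmonomial (m + d) \<in> C"
  unfolding is_ideal_def by (metis add.commute dmonomial_mult)

lemma dmonomial_mem_if_keys_subset:
  assumes "is_ideal C" "radical_set C" "dmonomial p \<in> C" "Poly_Mapping.keys p \<subseteq> Poly_Mapping.keys m"
  shows "dmonomial m \<in> C"
proof -
  define k where "k = Suc (sum (Poly_Mapping.lookup p) (Poly_Mapping.keys p))"
  have le: "Poly_Mapping.lookup p v \<le> k * Poly_Mapping.lookup m v" for v
  proof (cases "v \<in> Poly_Mapping.keys p")
    case True
    then have "v \<in> Poly_Mapping.keys m" using assms(4) by blast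
    then have "1 \<le> Poly_Mapping.lookup m v" by (simp add: in_keys_iff)
    moreover have "Poly_Mapping.lookup p v \<le> k"
      using member_le_sum[OF True, of "Poly_Mapping.lookup p"] by (simp add: k_def)
    ultimately show ?thesis by (metis mult.right_neutral mult_le_mono2 order_trans)
  qed (simp add: in_keys_iff)
  have "p + ((\<Sum>_<k. m) - p) = (\<Sum>_<k. m)"
    by (rule poly_mapping_eqI) (simp add: lookup_add lookup_minus lookup_sum le)
  then have "dmonomial m ^ k \<in> C"
    using dmonomial_add_mem[OF assms(1,3)] by (metis dmonomial_power)
  moreover have "0 < k" by (simp add: k_def)
  ultimately show ?thesis using assms(2) unfolding radical_set_def by blast
qed

text \<open>For an ideal C, the largest monomial ideal contained in C.\<close>

definition monomial_interior :: "('n, 'k::field) dpoly set \<Rightarrow> ('n, 'k) dpoly set" where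
  "monomial_interior C = {f. \<forall>m\<in>Poly_Mapping.keys f. dmonomial m \<in> C}"

lemma restrict_vars_eq_0_if_dmonomial_not_mem:
  assumes "is_ideal C" "radical_set C" "f \<in> monomial_interior C" "dmonomial m \<notin> C"
  shows "restrict_vars (Poly_Mapping.keys m) f = 0"
proof (rule poly_mapping_eqI)
  fix p
  have "Poly_Mapping.lookup f p = 0" if "Poly_Mapping.keys p \<subseteq> Poly_Mapping.keys m"
  proof -
    have "dmonomial p \<notin> C" using dmonomial_mem_if_keys_subset[OF assms(1,2) _ that] assms(4) by blast
    then have "p \<notin> Poly_Mapping.keys f" using assms(3) by (auto simp: monomial_interior_def)
    then show ?thesis by (simp add: in_keys_iff)
  qed
  then show "Poly_Mapping.lookup (restrict_vars (Poly_Mapping.keys m) f) p = Poly_Mapping.lookup 0 p"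
    by (simp add: lookup_restrict_vars)
qed

lemma dmonomial_add_mem_if_mult_mem_monomial_interior:
  fixes a b :: "('n::finite, 'k::field) dpoly"
  assumes "is_ideal C" "radical_set C" "a * b \<in> monomial_interior C"
    and "m1 \<in> Poly_Mapping.keys a" "m2 \<in> Poly_Mapping.keys b"
  shows "dmonomial (m1 + m2) \<in> C"
proof (rule ccontr)
  let ?r = "restrict_vars (Poly_Mapping.keys (m1 + m2))"
  assume "dmonomial (m1 + m2) \<notin> C"
  then have "?r a * ?r b = 0"
    using restrict_vars_eq_0_if_dmonomial_not_mem[OF assms(1-3)] by (simp add: restrict_vars_mult)
  moreover have "Poly_Mapping.lookup (?r a) m1 \<noteq> 0" "Poly_Mapping.lookup (?r b) m2 \<noteq> 0"
    using assms(4,5) by (simp_all add: lookup_restrict_vars keys_add_nat in_keys_iff)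
  ultimately show False by (auto simp: dpoly_mult_eq_0_iff)
qed

lemma dmonomial_mem_if_power_mem_monomial_interior:
  fixes f :: "('n::finite, 'k::field) dpoly"
  assumes "is_ideal C" "radical_set C" "f ^ k \<in> monomial_interior C" "m \<in> Poly_Mapping.keys f"
  shows "dmonomial m \<in> C"
proof (rule ccontr)
  let ?r = "restrict_vars (Poly_Mapping.keys m)"
  assume "dmonomial m \<notin> C"
  then have "?r f ^ k = 0"
    using restrict_vars_eq_0_if_dmonomial_not_mem[OF assms(1-3)] by (simp add: restrict_vars_power)
  moreover have "Poly_Mapping.lookup (?r f) m \<noteq> 0"
    using assms(4) by (simp add: lookup_restrict_vars in_keys_iff)
  ultimately show False using dpoly_power_eq_0 by force
qed

lemma is_ideal_monomial_interior:
  assumes "is_ideal C"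
  shows "is_ideal (monomial_interior C)"
  unfolding is_ideal_def
proof (intro conjI ballI allI impI)
  show "0 \<in> monomial_interior C" by (simp add: monomial_interior_def)
next
  fix a b assume "a \<in> monomial_interior C" "b \<in> monomial_interior C"
  then show "a + b \<in> monomial_interior C"
    using keys_add[of a b] by (auto simp: monomial_interior_def)
next
  fix r a assume a: "a \<in> monomial_interior C"
  have "dmonomial q \<in> C" if "q \<in> Poly_Mapping.keys (r * a)" for q
  proof -
    obtain x y where "y \<in> Poly_Mapping.keys a" "q = y + x"
      using \<open>q \<in> _\<close> keys_mult[of r a] add.commute by blast
    then show ?thesis using a dmonomial_add_mem[OF assms] by (simp add: monomial_interior_def)
  qed
  then show "r * a \<in> monomial_interior C" by (simp add: monomial_interior_def)
qed

lemma sigma_ideal_monomial_interior: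
  assumes "difference_field \<sigma>" "sigma_ideal \<sigma> C"
  shows "sigma_ideal \<sigma> (monomial_interior C)"
proof -
  have "dmonomial (shift_mon m) \<in> C" if "dmonomial m \<in> C" for m
    using assms that by (metis sigma_ideal_def sigmaR_dmonomial)
  then show ?thesis
    using assms(2) is_ideal_monomial_interior keys_sigmaR
    by (fastforce simp: sigma_ideal_def monomial_interior_def)
qed

lemma well_mixed_monomial_interior:
  fixes C :: "('n::finite, 'k::field) dpoly set"
  assumes "difference_field \<sigma>" "is_ideal C" "well_mixed \<sigma> C" "radical_set C"
  shows "well_mixed \<sigma> (monomial_interior C)"
  unfolding well_mixed_def
proof (intro allI impI)
  fix a b assume ab: "a * b \<in> monomial_interior C"
  have "dmonomial q \<in> C" if "q \<in> Poly_Mapping.keys (a * sigmaR \<sigma> b)" for q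
  proof -
    obtain x z where "x \<in> Poly_Mapping.keys a" "z \<in> Poly_Mapping.keys b" "q = x + shift_mon z"
      using \<open>q \<in> _\<close> keys_mult[of a "sigmaR \<sigma> b"] keys_sigmaR[of \<sigma> b] by blast
    moreover have "dmonomial x * dmonomial z \<in> C"
      using dmonomial_add_mem_if_mult_mem_monomial_interior[OF assms(2,4) ab] calculation
      by (simp add: dmonomial_mult)
    ultimately show ?thesis
      using assms(1,3) by (metis well_mixed_def dmonomial_mult sigmaR_dmonomial)
  qed
  then show "a * sigmaR \<sigma> b \<in> monomial_interior C" by (simp add: monomial_interior_def)
qed

lemma radical_set_monomial_interior:
  fixes C :: "('n::finite, 'k::field) dpoly set"
  assumes "is_ideal C" "radical_set C"
  shows "radical_set (monomial_interior C)"
  using dmonomial_mem_if_power_mem_monomial_interior[OF assms]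
  by (auto simp: radical_set_def monomial_interior_def)

lemma dmonomial_mem_monomial_interior:
  "dmonomial m \<in> C \<Longrightarrow> dmonomial m \<in> monomial_interior C"
  by (simp add: monomial_interior_def dmonomial_def)

lemma ideal_gen_least: "is_ideal J \<Longrightarrow> S \<subseteq> J \<Longrightarrow> ideal_gen S \<subseteq> J"
  by (auto simp: ideal_gen_def)

lemma subset_ideal_gen: "S \<subseteq> ideal_gen S"
  by (auto simp: ideal_gen_def)

lemma sum_mem_ideal:
  assumes "is_ideal J" "\<And>x. x \<in> A \<Longrightarrow> g x \<in> J"
  shows "sum g A \<in> J"
  using assms(2)
proof (induction A rule: infinite_finite_induct)
  case (insert x A)
  then show ?case using assms(1) by (simp add: is_ideal_def)
qed (use assms(1) in \<open>simp_all add: is_ideal_def\<close>)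

lemma dpoly_eq_sum_dmonomials:
  fixes f :: "('n, 'k::field) dpoly"
  shows "f = (\<Sum>m\<in>Poly_Mapping.keys f. Poly_Mapping.single 0 (Poly_Mapping.lookup f m) * dmonomial m)"
proof (rule poly_mapping_eqI)
  fix p
  have "Poly_Mapping.lookup (\<Sum>m\<in>Poly_Mapping.keys f. Poly_Mapping.single 0 (Poly_Mapping.lookup f m) * dmonomial m) p
      = (\<Sum>m\<in>Poly_Mapping.keys f. if m = p then Poly_Mapping.lookup f m else 0)"
    by (simp add: lookup_sum dmonomial_def mult_single lookup_single when_def)
  also have "\<dots> = Poly_Mapping.lookup f p" by (simp add: in_keys_iff)
  finally show "Poly_Mapping.lookup f p = Poly_Mapping.lookup (\<Sum>m\<in>Poly_Mapping.keys f. Poly_Mapping.single 0 (Poly_Mapping.lookup f m) * dmonomial m) p"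
    by simp
qed

lemma monomial_interior_subset_ideal_gen:
  "monomial_interior C \<subseteq> ideal_gen (dmonomial ` {m. dmonomial m \<in> C})"
proof
  fix f assume f: "f \<in> monomial_interior C"
  have "f \<in> J" if "is_ideal J" "dmonomial ` {m. dmonomial m \<in> C} \<subseteq> J" for J
  proof -
    have "Poly_Mapping.single 0 (Poly_Mapping.lookup f m) * dmonomial m \<in> J" if "m \<in> Poly_Mapping.keys f" for m
    proof -
      have "dmonomial m \<in> J" using f that \<open>_ \<subseteq> J\<close> by (auto simp: monomial_interior_def)
      then show ?thesis using \<open>is_ideal J\<close> by (simp add: is_ideal_def)
    qed
    then have "(\<Sum>m\<in>Poly_Mapping.keys f. Poly_Mapping.single 0 (Poly_Mapping.lookup f m) * dmonomial m) \<in> J"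
      by (rule sum_mem_ideal[OF \<open>is_ideal J\<close>])
    then show "f \<in> J" by (subst dpoly_eq_sum_dmonomials)
  qed
  then show "f \<in> ideal_gen (dmonomial ` {m. dmonomial m \<in> C})" by (simp add: ideal_gen_def)
qed

lemma monomial_idealI:
  assumes "is_ideal C" "C \<subseteq> monomial_interior C"
  shows "monomial_ideal C"
proof -
  let ?S = "dmonomial ` {m. dmonomial m \<in> C}"
  have "C \<subseteq> ideal_gen ?S"
    using assms(2) monomial_interior_subset_ideal_gen by (rule order_trans)
  moreover have "ideal_gen ?S \<subseteq> C" by (rule ideal_gen_least[OF assms(1)]) auto
  ultimately have "C = ideal_gen ?S" by (rule antisym)
  moreover have "?S \<subseteq> range dmonomial" by blast
  ultimately show ?thesis unfolding monomial_ideal_def by blast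
qed

lemma rwm_closure_least:
  "sigma_ideal \<sigma> J \<Longrightarrow> well_mixed \<sigma> J \<Longrightarrow> radical_set J \<Longrightarrow> I \<subseteq> J \<Longrightarrow> rwm_closure \<sigma> I \<subseteq> J"
  unfolding rwm_closure_def by blast

lemma subset_rwm_closure: "I \<subseteq> rwm_closure \<sigma> I"
  unfolding rwm_closure_def by blast

lemma sigma_ideal_rwm_closure: "sigma_ideal \<sigma> (rwm_closure \<sigma> I)"
  unfolding rwm_closure_def sigma_ideal_def is_ideal_def by blast

lemma well_mixed_rwm_closure: "well_mixed \<sigma> (rwm_closure \<sigma> I)"
  unfolding rwm_closure_def well_mixed_def by blast

lemma radical_set_rwm_closure: "radical_set (rwm_closure \<sigma> I)"
  unfolding rwm_closure_def radical_set_def by blast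

theorem corollary5p5:
  fixes \<sigma> :: "'k::field_char_0 \<Rightarrow> 'k"
    and I :: "('n::finite, 'k) dpoly set"
  assumes "difference_field \<sigma>"
    and "sigma_ideal \<sigma> I" and "monomial_ideal I"
  shows "sigma_ideal \<sigma> (rwm_closure \<sigma> I) \<and> monomial_ideal (rwm_closure \<sigma> I)"
proof -
  let ?C = "rwm_closure \<sigma> I"
  have sig: "sigma_ideal \<sigma> ?C" and wm: "well_mixed \<sigma> ?C" and rad: "radical_set ?C"
    by (rule sigma_ideal_rwm_closure well_mixed_rwm_closure radical_set_rwm_closure)+
  then have ideal: "is_ideal ?C" by (simp add: sigma_ideal_def)
  obtain S where S: "S \<subseteq> range dmonomial" "I = ideal_gen S"
    using assms(3) unfolding monomial_ideal_def by blast
  have "S \<subseteq> ?C"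
    using S(2) subset_ideal_gen subset_rwm_closure by blast
  then have "S \<subseteq> monomial_interior ?C"
    using S(1) dmonomial_mem_monomial_interior by blast
  then have "ideal_gen S \<subseteq> monomial_interior ?C"
    by (rule ideal_gen_least[OF is_ideal_monomial_interior[OF ideal]])
  then have "I \<subseteq> monomial_interior ?C"
    by (simp only: S(2)[symmetric])
  then have "?C \<subseteq> monomial_interior ?C"
    by (rule rwm_closure_least[OF sigma_ideal_monomial_interior[OF assms(1) sig]
          well_mixed_monomial_interior[OF assms(1) ideal wm rad] radical_set_monomial_interior[OF ideal rad]])
  then show ?thesis using sig monomial_idealI[OF ideal] by blast
qed

end
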